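(* A map $f \colon Y \to X$ in $\widehat{\square}_\vee$ has the right lifting property against all maps $\delta_k \hat{\times} m$ ($k \in \{0,1\}$, $m$ a monomorphism) if and only if it is an unbiased fibration, i.e. it has the right lifting property against $r \hat{\times}_B m$ for all $r \colon B \to \mathbb{I}$ and all monomorphisms $m \colon A \rightarrowtail B$.
   Context: Semilattices: sets with an associative, commutative, idempotent binary operation $\vee$; homomorphisms preserve $\vee$. Let $\square_\vee$ be the category whose objects are the semilattices $[1]^n$ ($n\in\mathbb{N}$, $[1]=\{0<1\}$ with $\vee=\max$, pointwise structure) and whose morphisms are all semilattice homomorphisms between them. Fix a strongly inaccessible cardinal $\kappa$ and let $\widehat{\square}_\vee$ be the category of presheaves on $\square_\vee$ valued in $\kappa$-small sets. $\mathbb{I}$ is the representable presheaf on $[1]$, $\delta_k \colon 1 \to \mathbb{I}$ the endpoint inclusions. For $f\colon X\to Y$, $g\colon X'\to Y'$, the pushout product $f\hat\times g$ is the induced map $(X\times Y')\sqcup_{X\times X'}(Y\times X')\to Y\times Y'$. For $r\colon B\to\mathbb I$ and a mono $m\colon A\to B$, $M_r(m)$ is the pushout of $m$ and $\langle rm,\mathrm{id}_A\rangle\colon A\to\mathbb I\times A$, and $r\hat\times_B m\colon M_r(m)\to\mathbb I\times B$ is the unique map restricting to $\langle r,\mathrm{id}_B\rangle$ on $B$ and to $\mathbb I\times m$ on $\mathbb I\times A$. *)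

theory Defs
  imports Main "HOL-Library.FuncSet"
begin

text \<open>[1]^n is modelled as the powerset of {..<n}, with \<vee> = union (pointwise max).\<close>

definition Cube :: "nat \<Rightarrow> nat set set" where
  "Cube n = Pow {..<n}"

definition hom :: "nat \<Rightarrow> nat \<Rightarrow> (nat set \<Rightarrow> nat set) set" where
  "hom m n = {\<phi> \<in> Cube m \<rightarrow>\<^sub>E Cube n.
                 \<forall>x\<in>Cube m. \<forall>y\<in>Cube m. \<phi> (x \<union> y) = \<phi> x \<union> \<phi> y}"

text \<open>psh_act X m n \<phi> : X n \<rightarrow> X m for \<phi> \<in> hom m n.\<close>
record 'a psh =
  psh_obj :: "nat \<Rightarrow> 'a set"
  psh_act :: "nat \<Rightarrow> nat \<Rightarrow> (nat set \<Rightarrow> nat set) \<Rightarrow> 'a \<Rightarrow> 'a"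

definition is_psh :: "'a psh \<Rightarrow> bool" where
  "is_psh X \<longleftrightarrow>
     (\<forall>m n \<phi> x. \<phi> \<in> hom m n \<longrightarrow> x \<in> psh_obj X n \<longrightarrow> psh_act X m n \<phi> x \<in> psh_obj X m) \<and>
     (\<forall>n x. x \<in> psh_obj X n \<longrightarrow> psh_act X n n (restrict id (Cube n)) x = x) \<and>
     (\<forall>k m n \<phi> \<psi> x. \<phi> \<in> hom m n \<longrightarrow> \<psi> \<in> hom k m \<longrightarrow> x \<in> psh_obj X n \<longrightarrow>
        psh_act X k m \<psi> (psh_act X m n \<phi> x) = psh_act X k n (compose (Cube k) \<phi> \<psi>) x)"

text \<open>Natural transformations X \<rightarrow> Y (only values on the carriers matter).\<close>
definition is_nat :: "'a psh \<Rightarrow> 'b psh \<Rightarrow> (nat \<Rightarrow> 'a \<Rightarrow> 'b) \<Rightarrow> bool" where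
  "is_nat X Y f \<longleftrightarrow>
     (\<forall>n x. x \<in> psh_obj X n \<longrightarrow> f n x \<in> psh_obj Y n) \<and>
     (\<forall>m n \<phi> x. \<phi> \<in> hom m n \<longrightarrow> x \<in> psh_obj X n \<longrightarrow>
        f m (psh_act X m n \<phi> x) = psh_act Y m n \<phi> (f n x))"

definition is_mono :: "'a psh \<Rightarrow> 'b psh \<Rightarrow> (nat \<Rightarrow> 'a \<Rightarrow> 'b) \<Rightarrow> bool" where
  "is_mono X Y f \<longleftrightarrow> is_nat X Y f \<and> (\<forall>n. inj_on (f n) (psh_obj X n))"

definition lifts ::
  "'a psh \<Rightarrow> 'b psh \<Rightarrow> (nat \<Rightarrow> 'a \<Rightarrow> 'b) \<Rightarrow> 'c psh \<Rightarrow> 'd psh \<Rightarrow> (nat \<Rightarrow> 'c \<Rightarrow> 'd) \<Rightarrow> bool" where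
  "lifts A B i Y X p \<longleftrightarrow>
     (\<forall>u v. is_nat A Y u \<and> is_nat B X v \<and>
            (\<forall>n a. a \<in> psh_obj A n \<longrightarrow> p n (u n a) = v n (i n a)) \<longrightarrow>
        (\<exists>h. is_nat B Y h \<and>
             (\<forall>n a. a \<in> psh_obj A n \<longrightarrow> h n (i n a) = u n a) \<and>
             (\<forall>n b. b \<in> psh_obj B n \<longrightarrow> p n (h n b) = v n b)))"

definition Ipsh :: "(nat set \<Rightarrow> nat set) psh" where
  "Ipsh = \<lparr>psh_obj = (\<lambda>n. hom n 1), psh_act = (\<lambda>m n \<phi> x. compose (Cube m) x \<phi>)\<rparr>"

definition one_psh :: "unit psh" where
  "one_psh = \<lparr>psh_obj = (\<lambda>n. {()}), psh_act = (\<lambda>m n \<phi> x. x)\<rparr>"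

definition delta :: "nat \<Rightarrow> nat \<Rightarrow> unit \<Rightarrow> (nat set \<Rightarrow> nat set)" where
  "delta k = (\<lambda>n _. restrict (\<lambda>_. if k = 0 then {} else {0}) (Cube n))"

definition prod_psh :: "'a psh \<Rightarrow> 'b psh \<Rightarrow> ('a \<times> 'b) psh" where
  "prod_psh X Y = \<lparr>psh_obj = (\<lambda>n. psh_obj X n \<times> psh_obj Y n),
                   psh_act = (\<lambda>m n \<phi> (x, y). (psh_act X m n \<phi> x, psh_act Y m n \<phi> y))\<rparr>"

definition po_rel :: "'x psh \<Rightarrow> (nat \<Rightarrow> 'x \<Rightarrow> 'b) \<Rightarrow> (nat \<Rightarrow> 'x \<Rightarrow> 'c) \<Rightarrow> nat \<Rightarrow> ('b + 'c) rel" where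
  "po_rel A g h n =
     (let G = {(Inl (g n a), Inr (h n a)) | a. a \<in> psh_obj A n} in (G \<union> G\<inverse>)\<^sup>*)"

definition pushout ::
  "'x psh \<Rightarrow> 'b psh \<Rightarrow> 'c psh \<Rightarrow> (nat \<Rightarrow> 'x \<Rightarrow> 'b) \<Rightarrow> (nat \<Rightarrow> 'x \<Rightarrow> 'c) \<Rightarrow> ('b + 'c) set psh" where
  "pushout A B C g h =
     \<lparr>psh_obj = (\<lambda>n. (psh_obj B n <+> psh_obj C n) // po_rel A g h n),
      psh_act = (\<lambda>m n \<phi> c. (\<Union>x\<in>c. po_rel A g h m
                    `` {map_sum (psh_act B m n \<phi>) (psh_act C m n \<phi>) x}))\<rparr>"

definition po_copair :: "(nat \<Rightarrow> 'b \<Rightarrow> 'z) \<Rightarrow> (nat \<Rightarrow> 'c \<Rightarrow> 'z) \<Rightarrow> nat \<Rightarrow> ('b + 'c) set \<Rightarrow> 'z" where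
  "po_copair u v n c = the_elem (case_sum (u n) (v n) ` c)"

definition pp_dom ::
  "'x psh \<Rightarrow> 'y psh \<Rightarrow> (nat \<Rightarrow> 'x \<Rightarrow> 'y) \<Rightarrow> 'u psh \<Rightarrow> 'v psh \<Rightarrow> (nat \<Rightarrow> 'u \<Rightarrow> 'v)
   \<Rightarrow> (('x \<times> 'v) + ('y \<times> 'u)) set psh" where
  "pp_dom X Y f X' Y' g =
     pushout (prod_psh X X') (prod_psh X Y') (prod_psh Y X')
       (\<lambda>n (x, x'). (x, g n x')) (\<lambda>n (x, x'). (f n x, x'))"

definition pp_map ::
  "(nat \<Rightarrow> 'x \<Rightarrow> 'y) \<Rightarrow> (nat \<Rightarrow> 'u \<Rightarrow> 'v) \<Rightarrow> nat \<Rightarrow> (('x \<times> 'v) + ('y \<times> 'u)) set \<Rightarrow> 'y \<times> 'v" where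
  "pp_map f g = po_copair (\<lambda>n (x, y'). (f n x, y')) (\<lambda>n (y, x'). (y, g n x'))"

definition Mr ::
  "'a psh \<Rightarrow> 'b psh \<Rightarrow> (nat \<Rightarrow> 'b \<Rightarrow> (nat set \<Rightarrow> nat set)) \<Rightarrow> (nat \<Rightarrow> 'a \<Rightarrow> 'b)
   \<Rightarrow> ('b + ((nat set \<Rightarrow> nat set) \<times> 'a)) set psh" where
  "Mr A B r m = pushout A B (prod_psh Ipsh A) m (\<lambda>n a. (r n (m n a), a))"

definition rB_map ::
  "(nat \<Rightarrow> 'b \<Rightarrow> (nat set \<Rightarrow> nat set)) \<Rightarrow> (nat \<Rightarrow> 'a \<Rightarrow> 'b)
   \<Rightarrow> nat \<Rightarrow> ('b + ((nat set \<Rightarrow> nat set) \<times> 'a)) set \<Rightarrow> (nat set \<Rightarrow> nat set) \<times> 'b" where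
  "rB_map r m = po_copair (\<lambda>n b. (r n b, b)) (\<lambda>n (i, a). (i, m n a))"

definition rlp_delta_pp :: "'a psh \<Rightarrow> 'a psh \<Rightarrow> (nat \<Rightarrow> 'a \<Rightarrow> 'a) \<Rightarrow> bool" where
  "rlp_delta_pp Y X f \<longleftrightarrow>
     (\<forall>k \<in> {0, 1}. \<forall>(A :: 'a psh) (B :: 'a psh) m.
        is_psh A \<and> is_psh B \<and> is_mono A B m \<longrightarrow>
        lifts (pp_dom one_psh Ipsh (delta k) A B m) (prod_psh Ipsh B) (pp_map (delta k) m) Y X f)"

definition unbiased_fibration :: "'a psh \<Rightarrow> 'a psh \<Rightarrow> (nat \<Rightarrow> 'a \<Rightarrow> 'a) \<Rightarrow> bool" where
  "unbiased_fibration Y X f \<longleftrightarrow>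
     (\<forall>(A :: 'a psh) (B :: 'a psh) r m.
        is_psh A \<and> is_psh B \<and> is_nat B Ipsh r \<and> is_mono A B m \<longrightarrow>
        lifts (Mr A B r m) (prod_psh Ipsh B) (rB_map r m) Y X f)"

end

theory Submission
  imports Defs
begin

text \<open>
  A lifting problem against a map out of a pushout is a compatible pair of lifting data on the two
  legs, so both \<open>\<delta>\<^sub>k \<hat>\<times> m\<close> and \<open>r \<hat>\<times>\<^sub>B m\<close> reduce to an elementary condition, and
  \<open>\<delta>\<^sub>k \<hat>\<times> m\<close> is the case of the constant \<open>r = \<delta>\<^sub>k\<close>.  Unbiased fibrations therefore
  lift against all \<open>\<delta>\<^sub>k \<hat>\<times> m\<close>.

  Conversely, let \<open>(uB, uI, v)\<close> be a lifting problem against \<open>r \<hat>\<times>\<^sub>B m\<close>.  Shearing it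
  by the connection, \<open>(i, b) \<mapsto> (i \<vee> r b, b)\<close>, gives a problem against \<open>\<delta>\<^sub>0 \<hat>\<times> m\<close>,
  solved by some \<open>h : I \<times> B \<rightarrow> Y\<close> with \<open>h (0, b) = uB b\<close> and
  \<open>h (i, m a) = uI (i \<vee> r (m a), a)\<close>.  Next lift against \<open>\<delta>\<^sub>1 \<hat>\<times> (S \<hookrightarrow> I \<times> B)\<close>,
  \<open>S\<close> the image of \<open>r \<hat>\<times>\<^sub>B m\<close>: the top face is \<open>h (1, -)\<close>, the side on \<open>I \<times> S\<close> is
  \<open>h\<close> over the graph of \<open>r\<close> and \<open>uI (z \<vee> i, a)\<close> over \<open>I \<times> I \<times> A\<close>, and the base is
  \<open>v (z \<vee> i, b)\<close>.  Restricting the solution to \<open>z = 0\<close> solves the original problem.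
  Since \<open>S\<close> and \<open>I \<times> B\<close> are not presheaves in the universe, they are first encoded into it,
  which is possible as the universe is infinite and each \<open>hom n 1\<close> is finite; the lifting
  property is invariant under this transport because it is closed under retracts.
\<close>

text \<open>Keeps \<open>hom n 1\<close> from being rewritten to \<open>hom n (Suc 0)\<close> by the simplifier.\<close>
declare One_nat_def [simp del]

section \<open>Cubes and the interval\<close>

lemma finite_hom: "finite (hom m n)"
proof (rule finite_subset)
  show "hom m n \<subseteq> Cube m \<rightarrow>\<^sub>E Cube n"
    by (auto simp: hom_def)
  show "finite (Cube m \<rightarrow>\<^sub>E Cube n)"
    by (intro finite_PiE) (auto simp: Cube_def)
qed

lemma homI:
  assumes "\<And>x. x \<in> Cube m \<Longrightarrow> \<phi> x \<in> Cube n" and "\<And>x. x \<notin> Cube m \<Longrightarrow> \<phi> x = undefined"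
    and "\<And>x y. x \<in> Cube m \<Longrightarrow> y \<in> Cube m \<Longrightarrow> \<phi> (x \<union> y) = \<phi> x \<union> \<phi> y"
  shows "\<phi> \<in> hom m n"
  using assms by (auto simp: hom_def)

lemma hom_in_Cube: "\<phi> \<in> hom m n \<Longrightarrow> x \<in> Cube m \<Longrightarrow> \<phi> x \<in> Cube n"
  by (auto simp: hom_def)

lemma hom_undefined: "\<phi> \<in> hom m n \<Longrightarrow> x \<notin> Cube m \<Longrightarrow> \<phi> x = undefined"
  by (auto simp: hom_def)

lemma hom_Un: "\<phi> \<in> hom m n \<Longrightarrow> x \<in> Cube m \<Longrightarrow> y \<in> Cube m \<Longrightarrow> \<phi> (x \<union> y) = \<phi> x \<union> \<phi> y"
  by (auto simp: hom_def)

lemma Un_in_Cube: "x \<in> Cube n \<Longrightarrow> y \<in> Cube n \<Longrightarrow> x \<union> y \<in> Cube n"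
  by (auto simp: Cube_def)

lemma compose_in_hom: "\<phi> \<in> hom m n \<Longrightarrow> \<psi> \<in> hom n k \<Longrightarrow> compose (Cube m) \<psi> \<phi> \<in> hom m k"
  by (rule homI) (auto simp: compose_def hom_in_Cube hom_Un Un_in_Cube)

lemma delta_in_hom: "delta k n u \<in> hom n 1"
  by (rule homI) (auto simp: delta_def Cube_def)

lemma compose_delta: "\<phi> \<in> hom m n \<Longrightarrow> compose (Cube m) (delta k n u) \<phi> = delta k m u"
  by (intro ext) (auto simp: delta_def compose_def hom_in_Cube)

text \<open>The connection \<open>\<vee> : I \<times> I \<rightarrow> I\<close>; it exists because every \<open>\<vee>\<close>-homomorphism is a morphism of the site.\<close>
definition Ijoin :: "nat \<Rightarrow> (nat set \<Rightarrow> nat set) \<Rightarrow> (nat set \<Rightarrow> nat set) \<Rightarrow> nat set \<Rightarrow> nat set" where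
  "Ijoin n i j = restrict (\<lambda>x. i x \<union> j x) (Cube n)"

lemma Ijoin_in_hom: "i \<in> hom n 1 \<Longrightarrow> j \<in> hom n 1 \<Longrightarrow> Ijoin n i j \<in> hom n 1"
  by (rule homI) (auto simp: Ijoin_def hom_in_Cube hom_Un Un_in_Cube)

lemma compose_Ijoin:
  "\<phi> \<in> hom m n \<Longrightarrow> compose (Cube m) (Ijoin n i j) \<phi> = Ijoin m (compose (Cube m) i \<phi>) (compose (Cube m) j \<phi>)"
  by (intro ext) (auto simp: Ijoin_def compose_def hom_in_Cube)

lemma Ijoin_delta0: "i \<in> hom n 1 \<Longrightarrow> Ijoin n (delta 0 n u) i = i"
  by (intro ext) (auto simp: Ijoin_def delta_def hom_undefined)

lemma Ijoin_delta1: "i \<in> hom n 1 \<Longrightarrow> Ijoin n (delta 1 n u) i = delta 1 n u"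
proof -
  assume i: "i \<in> hom n 1"
  have "i x \<subseteq> {0}" if "x \<in> Cube n" for x
    using hom_in_Cube[OF i that] by (auto simp: Cube_def)
  then show ?thesis
    by (intro ext) (auto simp: Ijoin_def delta_def)
qed

section \<open>Presheaves\<close>

lemma psh_obj_prod_psh [simp]: "psh_obj (prod_psh P Q) n = psh_obj P n \<times> psh_obj Q n"
  by (simp add: prod_psh_def)

lemma psh_act_prod_psh [simp]:
  "psh_act (prod_psh P Q) m n \<phi> x = (psh_act P m n \<phi> (fst x), psh_act Q m n \<phi> (snd x))"
  by (simp add: prod_psh_def split: prod.split)

lemma psh_obj_Ipsh [simp]: "psh_obj Ipsh n = hom n 1"
  by (simp add: Ipsh_def)

lemma psh_act_Ipsh [simp]: "psh_act Ipsh m n \<phi> i = compose (Cube m) i \<phi>"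
  by (simp add: Ipsh_def)

lemma psh_obj_one_psh [simp]: "psh_obj one_psh n = {()}"
  by (simp add: one_psh_def)

lemma psh_act_one_psh [simp]: "psh_act one_psh m n \<phi> x = x"
  by (simp add: one_psh_def)

lemma psh_act_in_obj: "is_psh P \<Longrightarrow> \<phi> \<in> hom m n \<Longrightarrow> x \<in> psh_obj P n \<Longrightarrow> psh_act P m n \<phi> x \<in> psh_obj P m"
  by (simp add: is_psh_def)

lemma psh_act_id: "is_psh P \<Longrightarrow> x \<in> psh_obj P n \<Longrightarrow> psh_act P n n (restrict id (Cube n)) x = x"
  by (simp add: is_psh_def)

lemma psh_act_compose:
  "is_psh P \<Longrightarrow> \<phi> \<in> hom m n \<Longrightarrow> \<psi> \<in> hom k m \<Longrightarrow> x \<in> psh_obj P n \<Longrightarrow>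
    psh_act P k m \<psi> (psh_act P m n \<phi> x) = psh_act P k n (compose (Cube k) \<phi> \<psi>) x"
  by (simp add: is_psh_def)

lemma is_psh_prod_psh: "is_psh P \<Longrightarrow> is_psh Q \<Longrightarrow> is_psh (prod_psh P Q)"
  by (simp add: is_psh_def)

lemma is_psh_Ipsh: "is_psh Ipsh"
  unfolding is_psh_def psh_obj_Ipsh psh_act_Ipsh
  by (intro conjI allI impI compose_in_hom ext) (auto simp: compose_def hom_undefined hom_in_Cube)

lemma is_psh_one_psh: "is_psh one_psh"
  by (simp add: is_psh_def)

lemma is_nat_in_obj: "is_nat P Q u \<Longrightarrow> x \<in> psh_obj P n \<Longrightarrow> u n x \<in> psh_obj Q n"
  by (simp add: is_nat_def)

lemma is_nat_act:
  "is_nat P Q u \<Longrightarrow> \<phi> \<in> hom m n \<Longrightarrow> x \<in> psh_obj P n \<Longrightarrow> u m (psh_act P m n \<phi> x) = psh_act Q m n \<phi> (u n x)"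
  by (simp add: is_nat_def)

lemma is_nat_comp: "is_nat P Q u \<Longrightarrow> is_nat Q R w \<Longrightarrow> is_nat P R (\<lambda>n x. w n (u n x))"
  by (simp add: is_nat_def)

lemma is_nat_Pair: "is_nat P Q u \<Longrightarrow> is_nat P R w \<Longrightarrow> is_nat P (prod_psh Q R) (\<lambda>n x. (u n x, w n x))"
  by (simp add: is_nat_def)

lemma is_nat_id: "is_nat P P (\<lambda>n x. x)"
  by (simp add: is_nat_def)

lemma is_nat_unit: "is_nat P one_psh (\<lambda>n _. ())"
  by (simp add: is_nat_def)

lemma is_nat_fst: "is_nat (prod_psh P Q) P (\<lambda>n. fst)"
  by (simp add: is_nat_def)

lemma is_nat_snd: "is_nat (prod_psh P Q) Q (\<lambda>n. snd)"
  by (simp add: is_nat_def)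

lemma is_nat_delta: "is_nat P Ipsh (\<lambda>n _. delta k n u)"
  by (simp add: is_nat_def delta_in_hom compose_delta)

lemma inj_on_Times_infinite_UNIV:
  assumes "infinite (UNIV :: 'a set)" and "finite F"
  shows "\<exists>e :: 'b \<times> 'a \<Rightarrow> 'a. inj_on e (F \<times> UNIV)"
proof -
  have "ordLeq3 (card_of F) (card_of (UNIV :: 'a set))"
    using assms by (intro ordLess_imp_ordLeq finite_ordLess_infinite)
      (auto simp: Field_card_of card_of_well_order_on)
  then have "ordLeq3 (card_of (F \<times> (UNIV :: 'a set))) (card_of (UNIV :: 'a set))"
    using assms(1) by (intro card_of_Sigma_ordLeq_infinite) (auto intro: ordIso_imp_ordLeq card_of_refl)
  then show ?thesis
    by (auto simp: card_of_ordLeq[symmetric])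
qed

text \<open>Transport of a presheaf along levelwise injections \<open>E n\<close>; this is how presheaves such as
  \<open>I \<times> B\<close>, whose elements do not live in the universe type, are brought back into it.\<close>
definition encode_psh :: "(nat \<Rightarrow> 'b \<Rightarrow> 'a) \<Rightarrow> 'b psh \<Rightarrow> 'a psh" where
  "encode_psh E P =
     \<lparr>psh_obj = (\<lambda>n. E n ` psh_obj P n),
      psh_act = (\<lambda>m n \<phi> x. E m (psh_act P m n \<phi> (the_inv_into (psh_obj P n) (E n) x)))\<rparr>"

lemma psh_obj_encode_psh [simp]: "psh_obj (encode_psh E P) n = E n ` psh_obj P n"
  by (simp add: encode_psh_def)

lemma psh_act_encode_psh [simp]:
  "inj_on (E n) (psh_obj P n) \<Longrightarrow> x \<in> psh_obj P n \<Longrightarrow>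
    psh_act (encode_psh E P) m n \<phi> (E n x) = E m (psh_act P m n \<phi> x)"
  by (simp add: encode_psh_def the_inv_into_f_f)

lemma is_psh_encode_psh:
  assumes P: "is_psh P" and E: "\<And>n. inj_on (E n) (psh_obj P n)"
  shows "is_psh (encode_psh E P)"
  unfolding is_psh_def
  using psh_act_in_obj[OF P] psh_act_id[OF P] psh_act_compose[OF P] E by auto

lemma is_nat_encode:
  "(\<And>n. inj_on (E n) (psh_obj P n)) \<Longrightarrow> is_nat P (encode_psh E P) E"
  by (simp add: is_nat_def)

lemma is_nat_decode:
  assumes P: "is_psh P" and E: "\<And>n. inj_on (E n) (psh_obj P n)"
  shows "is_nat (encode_psh E P) P (\<lambda>n. the_inv_into (psh_obj P n) (E n))"
  unfolding is_nat_def using E psh_act_in_obj[OF P] by (auto simp: the_inv_into_f_f)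

section \<open>Pushouts\<close>

lemma equiv_po_rel: "equiv UNIV (po_rel A g h n)"
  unfolding po_rel_def Let_def
  by (intro equivI refl_rtrancl sym_rtrancl trans_rtrancl) (auto simp: sym_def)

lemma po_rel_glue: "a \<in> psh_obj A n \<Longrightarrow> (Inl (g n a), Inr (h n a)) \<in> po_rel A g h n"
  unfolding po_rel_def Let_def by (rule r_into_rtrancl) blast

lemma po_rel_refl: "(x, x) \<in> po_rel A g h n"
  by (simp add: po_rel_def Let_def)

lemma po_rel_sym: "(x, y) \<in> po_rel A g h n \<Longrightarrow> (y, x) \<in> po_rel A g h n"
  using equiv_po_rel by (metis equivE symD)

lemma po_rel_trans: "(x, y) \<in> po_rel A g h n \<Longrightarrow> (y, z) \<in> po_rel A g h n \<Longrightarrow> (x, z) \<in> po_rel A g h n"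
  using equiv_po_rel by (metis equivE transE)

lemma po_rel_induct [consumes 1, case_names refl glue]:
  assumes "(x, y) \<in> po_rel A g h n" and "\<And>x. R x x"
    and "\<And>x y z a. R x y \<Longrightarrow> a \<in> psh_obj A n \<Longrightarrow>
      {y, z} = {Inl (g n a), Inr (h n a)} \<Longrightarrow> R x z"
  shows "R x y"
  using assms(1) unfolding po_rel_def Let_def
  by (induction rule: rtrancl_induct) (auto intro: assms(2) assms(3))

lemma po_rel_case_sum:
  assumes "\<And>a. a \<in> psh_obj A n \<Longrightarrow> uB n (g n a) = uC n (h n a)"
    and "(x, y) \<in> po_rel A g h n"
  shows "case_sum (uB n) (uC n) x = case_sum (uB n) (uC n) y"
  using assms(2) by (induction rule: po_rel_induct) (auto dest!: assms(1) simp: doubleton_eq_iff)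

lemma po_rel_act:
  assumes A: "is_psh A" and g: "is_nat A B g" and h: "is_nat A C h" and \<phi>: "\<phi> \<in> hom m n"
    and "(x, y) \<in> po_rel A g h n"
  shows "(map_sum (psh_act B m n \<phi>) (psh_act C m n \<phi>) x,
          map_sum (psh_act B m n \<phi>) (psh_act C m n \<phi>) y) \<in> po_rel A g h m"
  using assms(5)
proof (induction rule: po_rel_induct)
  case (refl x)
  show ?case by (rule po_rel_refl)
next
  case (glue x y z a)
  let ?M = "map_sum (psh_act B m n \<phi>) (psh_act C m n \<phi>)"
  have "(Inl (g m (psh_act A m n \<phi> a)), Inr (h m (psh_act A m n \<phi> a))) \<in> po_rel A g h m"
    by (intro po_rel_glue psh_act_in_obj[OF A \<phi> glue.hyps(1)])
  moreover have "{?M y, ?M z} = {Inl (g m (psh_act A m n \<phi> a)), Inr (h m (psh_act A m n \<phi> a))}"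
    using glue.hyps(2)
    by (auto simp: is_nat_act[OF g \<phi> glue.hyps(1)] is_nat_act[OF h \<phi> glue.hyps(1)] doubleton_eq_iff)
  ultimately have "(?M y, ?M z) \<in> po_rel A g h m"
    by (auto simp: doubleton_eq_iff intro: po_rel_sym)
  with glue.IH show ?case
    by (rule po_rel_trans)
qed

lemma psh_act_pushout_class:
  assumes "is_psh A" and "is_nat A B g" and "is_nat A C h" and "\<phi> \<in> hom m n"
  shows "psh_act (pushout A B C g h) m n \<phi> (po_rel A g h n `` {x}) =
         po_rel A g h m `` {map_sum (psh_act B m n \<phi>) (psh_act C m n \<phi>) x}"
proof -
  let ?M = "map_sum (psh_act B m n \<phi>) (psh_act C m n \<phi>)"
  have "(\<Union>y\<in>po_rel A g h n `` {x}. po_rel A g h m `` {?M y}) = po_rel A g h m `` {?M x}"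
    using po_rel_act[OF assms] by (auto intro: po_rel_refl po_rel_trans)
  then show ?thesis
    by (simp add: pushout_def)
qed

lemma po_copair_class:
  assumes "\<And>a. a \<in> psh_obj A n \<Longrightarrow> uB n (g n a) = uC n (h n a)"
  shows "po_copair uB uC n (po_rel A g h n `` {x}) = case_sum (uB n) (uC n) x"
proof -
  have "case_sum (uB n) (uC n) ` (po_rel A g h n `` {x}) = {case_sum (uB n) (uC n) x}"
    using po_rel_case_sum[of A n uB g uC h, OF assms] po_rel_refl by fastforce
  then show ?thesis
    by (simp add: po_copair_def)
qed

lemma pushout_class_in_obj:
  "x \<in> psh_obj B n <+> psh_obj C n \<Longrightarrow> po_rel A g h n `` {x} \<in> psh_obj (pushout A B C g h) n"
  by (simp add: pushout_def quotientI)

lemma pushout_obj_cases: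
  assumes "c \<in> psh_obj (pushout A B C g h) n"
  obtains x where "x \<in> psh_obj B n <+> psh_obj C n" and "c = po_rel A g h n `` {x}"
  using assms by (auto simp: pushout_def quotient_def)

lemma is_nat_po_copair:
  assumes A: "is_psh A" and g: "is_nat A B g" and h: "is_nat A C h"
    and uB: "is_nat B Z uB" and uC: "is_nat C Z uC"
    and compat: "\<And>n a. a \<in> psh_obj A n \<Longrightarrow> uB n (g n a) = uC n (h n a)"
  shows "is_nat (pushout A B C g h) Z (po_copair uB uC)"
  unfolding is_nat_def
proof (intro conjI allI impI)
  fix n c
  assume "c \<in> psh_obj (pushout A B C g h) n"
  then obtain x where "x \<in> psh_obj B n <+> psh_obj C n" and "c = po_rel A g h n `` {x}"
    by (rule pushout_obj_cases)
  then show "po_copair uB uC n c \<in> psh_obj Z n"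
    using is_nat_in_obj[OF uB] is_nat_in_obj[OF uC] by (auto simp: po_copair_class compat)
next
  fix m n \<phi> c
  assume \<phi>: "\<phi> \<in> hom m n" and c: "c \<in> psh_obj (pushout A B C g h) n"
  from c obtain x where "x \<in> psh_obj B n <+> psh_obj C n" and "c = po_rel A g h n `` {x}"
    by (rule pushout_obj_cases)
  then show "po_copair uB uC m (psh_act (pushout A B C g h) m n \<phi> c) =
      psh_act Z m n \<phi> (po_copair uB uC n c)"
    using is_nat_act[OF uB \<phi>] is_nat_act[OF uC \<phi>]
    by (auto simp: psh_act_pushout_class[OF A g h \<phi>] po_copair_class compat)
qed

lemma is_nat_pushout_Inl:
  assumes "is_psh A" and "is_nat A B g" and "is_nat A C h"
  shows "is_nat B (pushout A B C g h) (\<lambda>n b. po_rel A g h n `` {Inl b})"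
  unfolding is_nat_def
  by (auto intro!: pushout_class_in_obj simp: psh_act_pushout_class[OF assms])

lemma is_nat_pushout_Inr:
  assumes "is_psh A" and "is_nat A B g" and "is_nat A C h"
  shows "is_nat C (pushout A B C g h) (\<lambda>n c. po_rel A g h n `` {Inr c})"
  unfolding is_nat_def
  by (auto intro!: pushout_class_in_obj simp: psh_act_pushout_class[OF assms])

lemma pushout_class_glue:
  "a \<in> psh_obj A n \<Longrightarrow> po_rel A g h n `` {Inl (g n a)} = po_rel A g h n `` {Inr (h n a)}"
  by (rule equiv_class_eq[OF equiv_po_rel po_rel_glue])

text \<open>Lifting against the map \<open>B \<squnion>\<^sub>A C \<rightarrow> D\<close> induced by \<open>jB\<close>, \<open>jC\<close>, phrased through the
  universal property of the pushout of \<open>g\<close> and \<open>h\<close>.\<close>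
definition span_lifts ::
  "'x psh \<Rightarrow> 'b psh \<Rightarrow> 'c psh \<Rightarrow> (nat \<Rightarrow> 'x \<Rightarrow> 'b) \<Rightarrow> (nat \<Rightarrow> 'x \<Rightarrow> 'c) \<Rightarrow>
   'd psh \<Rightarrow> (nat \<Rightarrow> 'b \<Rightarrow> 'd) \<Rightarrow> (nat \<Rightarrow> 'c \<Rightarrow> 'd) \<Rightarrow> 'y psh \<Rightarrow> 'z psh \<Rightarrow> (nat \<Rightarrow> 'y \<Rightarrow> 'z) \<Rightarrow> bool"
where
  "span_lifts A B C g h D jB jC Y X f \<longleftrightarrow>
    (\<forall>uB uC v. is_nat B Y uB \<and> is_nat C Y uC \<and> is_nat D X v \<and>
       (\<forall>n a. a \<in> psh_obj A n \<longrightarrow> uB n (g n a) = uC n (h n a)) \<and>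
       (\<forall>n b. b \<in> psh_obj B n \<longrightarrow> f n (uB n b) = v n (jB n b)) \<and>
       (\<forall>n c. c \<in> psh_obj C n \<longrightarrow> f n (uC n c) = v n (jC n c)) \<longrightarrow>
     (\<exists>k. is_nat D Y k \<and>
       (\<forall>n b. b \<in> psh_obj B n \<longrightarrow> k n (jB n b) = uB n b) \<and>
       (\<forall>n c. c \<in> psh_obj C n \<longrightarrow> k n (jC n c) = uC n c) \<and>
       (\<forall>n d. d \<in> psh_obj D n \<longrightarrow> f n (k n d) = v n d)))"

lemma span_lifts_if_lifts_pushout:
  assumes A: "is_psh A" and g: "is_nat A B g" and h: "is_nat A C h"
    and j: "\<And>n a. a \<in> psh_obj A n \<Longrightarrow> jB n (g n a) = jC n (h n a)"
    and L: "lifts (pushout A B C g h) D (po_copair jB jC) Y X f"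
  shows "span_lifts A B C g h D jB jC Y X f"
  unfolding span_lifts_def
proof (intro allI impI, elim conjE)
  fix uB uC v
  assume uB: "is_nat B Y uB" and uC: "is_nat C Y uC" and v: "is_nat D X v"
    and compat: "\<forall>n a. a \<in> psh_obj A n \<longrightarrow> uB n (g n a) = uC n (h n a)"
    and fB: "\<forall>n b. b \<in> psh_obj B n \<longrightarrow> f n (uB n b) = v n (jB n b)"
    and fC: "\<forall>n c. c \<in> psh_obj C n \<longrightarrow> f n (uC n c) = v n (jC n c)"
  let ?cls = "\<lambda>n x. po_rel A g h n `` {x}"
  have j_class: "po_copair jB jC n (?cls n x) = case_sum (jB n) (jC n) x" for n x
    using j by (rule po_copair_class)
  have u_class: "po_copair uB uC n (?cls n x) = case_sum (uB n) (uC n) x" for n x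
    using compat by (intro po_copair_class) blast
  have "is_nat (pushout A B C g h) Y (po_copair uB uC)"
    using compat by (intro is_nat_po_copair[OF A g h uB uC]) blast
  moreover have "\<forall>n c. c \<in> psh_obj (pushout A B C g h) n \<longrightarrow>
      f n (po_copair uB uC n c) = v n (po_copair jB jC n c)"
  proof (intro allI impI)
    fix n c
    assume "c \<in> psh_obj (pushout A B C g h) n"
    then show "f n (po_copair uB uC n c) = v n (po_copair jB jC n c)"
      by (cases rule: pushout_obj_cases) (use fB fC in \<open>auto simp: u_class j_class\<close>)
  qed
  ultimately obtain k where k: "is_nat D Y k"
    and k_class: "\<forall>n c. c \<in> psh_obj (pushout A B C g h) n \<longrightarrow> k n (po_copair jB jC n c) = po_copair uB uC n c"
    and fk: "\<forall>n d. d \<in> psh_obj D n \<longrightarrow> f n (k n d) = v n d"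
    using L v unfolding lifts_def by blast
  have "k n (case_sum (jB n) (jC n) x) = case_sum (uB n) (uC n) x"
    if "x \<in> psh_obj B n <+> psh_obj C n" for n x
    using k_class[rule_format, OF pushout_class_in_obj[OF that]] by (simp only: j_class u_class)
  then show "\<exists>k. is_nat D Y k \<and>
       (\<forall>n b. b \<in> psh_obj B n \<longrightarrow> k n (jB n b) = uB n b) \<and>
       (\<forall>n c. c \<in> psh_obj C n \<longrightarrow> k n (jC n c) = uC n c) \<and>
       (\<forall>n d. d \<in> psh_obj D n \<longrightarrow> f n (k n d) = v n d)"
    using k fk by (metis InlI InrI sum.case)
qed

lemma lifts_pushout_if_span_lifts:
  assumes A: "is_psh A" and g: "is_nat A B g" and h: "is_nat A C h"
    and j: "\<And>n a. a \<in> psh_obj A n \<Longrightarrow> jB n (g n a) = jC n (h n a)"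
    and L: "span_lifts A B C g h D jB jC Y X f"
  shows "lifts (pushout A B C g h) D (po_copair jB jC) Y X f"
  unfolding lifts_def
proof (intro allI impI, elim conjE)
  fix u v
  assume u: "is_nat (pushout A B C g h) Y u" and v: "is_nat D X v"
    and fu: "\<forall>n c. c \<in> psh_obj (pushout A B C g h) n \<longrightarrow> f n (u n c) = v n (po_copair jB jC n c)"
  let ?cls = "\<lambda>n x. po_rel A g h n `` {x}"
  have j_class: "po_copair jB jC n (?cls n x) = case_sum (jB n) (jC n) x" for n x
    using j by (rule po_copair_class)
  have "is_nat B Y (\<lambda>n b. u n (?cls n (Inl b)))"
    by (rule is_nat_comp[OF is_nat_pushout_Inl[OF A g h] u])
  moreover have "is_nat C Y (\<lambda>n c. u n (?cls n (Inr c)))"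
    by (rule is_nat_comp[OF is_nat_pushout_Inr[OF A g h] u])
  moreover have "\<forall>n a. a \<in> psh_obj A n \<longrightarrow> u n (?cls n (Inl (g n a))) = u n (?cls n (Inr (h n a)))"
    by (simp add: pushout_class_glue)
  moreover have "\<forall>n b. b \<in> psh_obj B n \<longrightarrow> f n (u n (?cls n (Inl b))) = v n (jB n b)"
    using fu pushout_class_in_obj by (fastforce simp: j_class)
  moreover have "\<forall>n c. c \<in> psh_obj C n \<longrightarrow> f n (u n (?cls n (Inr c))) = v n (jC n c)"
    using fu pushout_class_in_obj by (fastforce simp: j_class)
  ultimately obtain k where k: "is_nat D Y k"
    and kB: "\<forall>n b. b \<in> psh_obj B n \<longrightarrow> k n (jB n b) = u n (?cls n (Inl b))"
    and kC: "\<forall>n c. c \<in> psh_obj C n \<longrightarrow> k n (jC n c) = u n (?cls n (Inr c))"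
    and fk: "\<forall>n d. d \<in> psh_obj D n \<longrightarrow> f n (k n d) = v n d"
    using L v unfolding span_lifts_def by blast
  have "k n (po_copair jB jC n c) = u n c" if "c \<in> psh_obj (pushout A B C g h) n" for n c
    using that by (cases rule: pushout_obj_cases) (use kB kC in \<open>auto simp: j_class\<close>)
  then show "\<exists>k. is_nat D Y k \<and>
      (\<forall>n c. c \<in> psh_obj (pushout A B C g h) n \<longrightarrow> k n (po_copair jB jC n c) = u n c) \<and>
      (\<forall>n d. d \<in> psh_obj D n \<longrightarrow> f n (k n d) = v n d)"
    using k fk by blast
qed

lemma lifts_pushout_iff:
  assumes "is_psh A" and "is_nat A B g" and "is_nat A C h"
    and "\<And>n a. a \<in> psh_obj A n \<Longrightarrow> jB n (g n a) = jC n (h n a)"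
  shows "lifts (pushout A B C g h) D (po_copair jB jC) Y X f \<longleftrightarrow> span_lifts A B C g h D jB jC Y X f"
  using span_lifts_if_lifts_pushout[where jB = jB and jC = jC, OF assms]
    lifts_pushout_if_span_lifts[where jB = jB and jC = jC, OF assms] by blast

section \<open>Lifting against \<open>r \<hat>\<times>\<^sub>B m\<close>\<close>

text \<open>The right lifting property against \<open>r \<hat>\<times>\<^sub>B m\<close> without forming \<open>M\<^sub>r(m)\<close>; unlike
  \<^const>\<open>lifts\<close> it makes sense for presheaves in any universe.\<close>
definition rlp_rB ::
  "(nat \<Rightarrow> 'b \<Rightarrow> nat set \<Rightarrow> nat set) \<Rightarrow> 'x psh \<Rightarrow> 'b psh \<Rightarrow> (nat \<Rightarrow> 'x \<Rightarrow> 'b) \<Rightarrow>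
   'y psh \<Rightarrow> 'z psh \<Rightarrow> (nat \<Rightarrow> 'y \<Rightarrow> 'z) \<Rightarrow> bool"
where
  "rlp_rB r A B m Y X f \<longleftrightarrow>
    (\<forall>uB uI v. is_nat B Y uB \<and> is_nat (prod_psh Ipsh A) Y uI \<and> is_nat (prod_psh Ipsh B) X v \<and>
       (\<forall>n a. a \<in> psh_obj A n \<longrightarrow> uB n (m n a) = uI n (r n (m n a), a)) \<and>
       (\<forall>n b. b \<in> psh_obj B n \<longrightarrow> f n (uB n b) = v n (r n b, b)) \<and>
       (\<forall>n i a. i \<in> hom n 1 \<longrightarrow> a \<in> psh_obj A n \<longrightarrow> f n (uI n (i, a)) = v n (i, m n a)) \<longrightarrow>
     (\<exists>k. is_nat (prod_psh Ipsh B) Y k \<and>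
       (\<forall>n b. b \<in> psh_obj B n \<longrightarrow> k n (r n b, b) = uB n b) \<and>
       (\<forall>n i a. i \<in> hom n 1 \<longrightarrow> a \<in> psh_obj A n \<longrightarrow> k n (i, m n a) = uI n (i, a)) \<and>
       (\<forall>n i b. i \<in> hom n 1 \<longrightarrow> b \<in> psh_obj B n \<longrightarrow> f n (k n (i, b)) = v n (i, b))))"

lemma rlp_rBI:
  assumes "\<And>uB uI v. is_nat B Y uB \<Longrightarrow> is_nat (prod_psh Ipsh A) Y uI \<Longrightarrow> is_nat (prod_psh Ipsh B) X v \<Longrightarrow>
      (\<And>n a. a \<in> psh_obj A n \<Longrightarrow> uB n (m n a) = uI n (r n (m n a), a)) \<Longrightarrow>
      (\<And>n b. b \<in> psh_obj B n \<Longrightarrow> f n (uB n b) = v n (r n b, b)) \<Longrightarrow>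
      (\<And>n i a. i \<in> hom n 1 \<Longrightarrow> a \<in> psh_obj A n \<Longrightarrow> f n (uI n (i, a)) = v n (i, m n a)) \<Longrightarrow>
      \<exists>k. is_nat (prod_psh Ipsh B) Y k \<and>
       (\<forall>n b. b \<in> psh_obj B n \<longrightarrow> k n (r n b, b) = uB n b) \<and>
       (\<forall>n i a. i \<in> hom n 1 \<longrightarrow> a \<in> psh_obj A n \<longrightarrow> k n (i, m n a) = uI n (i, a)) \<and>
       (\<forall>n i b. i \<in> hom n 1 \<longrightarrow> b \<in> psh_obj B n \<longrightarrow> f n (k n (i, b)) = v n (i, b))"
  shows "rlp_rB r A B m Y X f"
  unfolding rlp_rB_def by (intro allI impI, elim conjE) (rule assms; simp)

lemma rlp_rBE:
  assumes "rlp_rB r A B m Y X f"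
    and "is_nat B Y uB" and "is_nat (prod_psh Ipsh A) Y uI" and "is_nat (prod_psh Ipsh B) X v"
    and "\<And>n a. a \<in> psh_obj A n \<Longrightarrow> uB n (m n a) = uI n (r n (m n a), a)"
    and "\<And>n b. b \<in> psh_obj B n \<Longrightarrow> f n (uB n b) = v n (r n b, b)"
    and "\<And>n i a. i \<in> hom n 1 \<Longrightarrow> a \<in> psh_obj A n \<Longrightarrow> f n (uI n (i, a)) = v n (i, m n a)"
  obtains k where "is_nat (prod_psh Ipsh B) Y k"
    and "\<And>n b. b \<in> psh_obj B n \<Longrightarrow> k n (r n b, b) = uB n b"
    and "\<And>n i a. i \<in> hom n 1 \<Longrightarrow> a \<in> psh_obj A n \<Longrightarrow> k n (i, m n a) = uI n (i, a)"
    and "\<And>n i b. i \<in> hom n 1 \<Longrightarrow> b \<in> psh_obj B n \<Longrightarrow> f n (k n (i, b)) = v n (i, b)"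
  using assms(1)[unfolded rlp_rB_def, rule_format, of uB uI v] assms(2-) that by blast

lemma all_in_prod_psh_Ipsh:
  "(\<forall>n c. c \<in> psh_obj (prod_psh Ipsh A) n \<longrightarrow> P n c) \<longleftrightarrow>
   (\<forall>n i a. i \<in> hom n 1 \<longrightarrow> a \<in> psh_obj A n \<longrightarrow> P n (i, a))"
  by auto

lemma lifts_Mr_iff_rlp_rB:
  assumes A: "is_psh A" and r: "is_nat B Ipsh r" and m: "is_nat A B m"
  shows "lifts (Mr A B r m) (prod_psh Ipsh B) (rB_map r m) Y X f \<longleftrightarrow> rlp_rB r A B m Y X f"
proof -
  have "is_nat A (prod_psh Ipsh A) (\<lambda>n a. (r n (m n a), a))"
    by (rule is_nat_Pair[OF is_nat_comp[OF m r] is_nat_id])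
  then have "lifts (Mr A B r m) (prod_psh Ipsh B) (rB_map r m) Y X f \<longleftrightarrow>
      span_lifts A B (prod_psh Ipsh A) m (\<lambda>n a. (r n (m n a), a)) (prod_psh Ipsh B)
        (\<lambda>n b. (r n b, b)) (\<lambda>n (i, a). (i, m n a)) Y X f"
    unfolding Mr_def rB_map_def by (intro lifts_pushout_iff A m) auto
  also have "\<dots> \<longleftrightarrow> rlp_rB r A B m Y X f"
    unfolding span_lifts_def rlp_rB_def all_in_prod_psh_Ipsh case_prod_conv ..
  finally show ?thesis .
qed

lemma rlp_rB_delta_if_span_lifts:
  assumes S: "span_lifts (prod_psh one_psh A) (prod_psh one_psh B) (prod_psh Ipsh A)
      (\<lambda>n (x, a). (x, m n a)) (\<lambda>n (x, a). (delta k n x, a)) (prod_psh Ipsh B)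
      (\<lambda>n (x, b). (delta k n x, b)) (\<lambda>n (i, a). (i, m n a)) Y X f"
  shows "rlp_rB (\<lambda>n _. delta k n ()) A B m Y X f"
proof (rule rlp_rBI)
  fix uB uI v
  assume uB: "is_nat B Y uB" and uI: "is_nat (prod_psh Ipsh A) Y uI" and v: "is_nat (prod_psh Ipsh B) X v"
    and "\<And>n a. a \<in> psh_obj A n \<Longrightarrow> uB n (m n a) = uI n (delta k n (), a)"
    and "\<And>n b. b \<in> psh_obj B n \<Longrightarrow> f n (uB n b) = v n (delta k n (), b)"
    and "\<And>n i a. i \<in> hom n 1 \<Longrightarrow> a \<in> psh_obj A n \<Longrightarrow> f n (uI n (i, a)) = v n (i, m n a)"
  moreover have "is_nat (prod_psh one_psh B) Y (\<lambda>n p. uB n (snd p))"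
    by (rule is_nat_comp[OF is_nat_snd uB])
  ultimately have "\<exists>h. is_nat (prod_psh Ipsh B) Y h \<and>
     (\<forall>n p. p \<in> psh_obj (prod_psh one_psh B) n \<longrightarrow> h n ((\<lambda>n (x, b). (delta k n x, b)) n p) = uB n (snd p)) \<and>
     (\<forall>n c. c \<in> psh_obj (prod_psh Ipsh A) n \<longrightarrow> h n ((\<lambda>n (i, a). (i, m n a)) n c) = uI n c) \<and>
     (\<forall>n d. d \<in> psh_obj (prod_psh Ipsh B) n \<longrightarrow> f n (h n d) = v n d)"
    by (intro S[unfolded span_lifts_def, rule_format]) auto
  then show "\<exists>h. is_nat (prod_psh Ipsh B) Y h \<and>
     (\<forall>n b. b \<in> psh_obj B n \<longrightarrow> h n (delta k n (), b) = uB n b) \<and>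
     (\<forall>n i a. i \<in> hom n 1 \<longrightarrow> a \<in> psh_obj A n \<longrightarrow> h n (i, m n a) = uI n (i, a)) \<and>
     (\<forall>n i b. i \<in> hom n 1 \<longrightarrow> b \<in> psh_obj B n \<longrightarrow> f n (h n (i, b)) = v n (i, b))"
    by auto
qed

lemma span_lifts_if_rlp_rB_delta:
  assumes R: "rlp_rB (\<lambda>n _. delta k n ()) A B m Y X f"
  shows "span_lifts (prod_psh one_psh A) (prod_psh one_psh B) (prod_psh Ipsh A)
      (\<lambda>n (x, a). (x, m n a)) (\<lambda>n (x, a). (delta k n x, a)) (prod_psh Ipsh B)
      (\<lambda>n (x, b). (delta k n x, b)) (\<lambda>n (i, a). (i, m n a)) Y X f"
  unfolding span_lifts_def
proof (intro allI impI, elim conjE)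
  fix uB uI v
  assume uB: "is_nat (prod_psh one_psh B) Y uB" and uI: "is_nat (prod_psh Ipsh A) Y uI"
    and v: "is_nat (prod_psh Ipsh B) X v"
    and c1: "\<forall>n p. p \<in> psh_obj (prod_psh one_psh A) n \<longrightarrow>
      uB n ((\<lambda>n (x, a). (x, m n a)) n p) = uI n ((\<lambda>n (x, a). (delta k n x, a)) n p)"
    and c2: "\<forall>n p. p \<in> psh_obj (prod_psh one_psh B) n \<longrightarrow>
      f n (uB n p) = v n ((\<lambda>n (x, b). (delta k n x, b)) n p)"
    and c3: "\<forall>n c. c \<in> psh_obj (prod_psh Ipsh A) n \<longrightarrow> f n (uI n c) = v n ((\<lambda>n (i, a). (i, m n a)) n c)"
  have uB1: "is_nat B Y (\<lambda>n b. uB n ((), b))"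
    by (rule is_nat_comp[OF is_nat_Pair[OF is_nat_unit is_nat_id] uB])
  obtain h where "is_nat (prod_psh Ipsh B) Y h"
    and "\<And>n b. b \<in> psh_obj B n \<Longrightarrow> h n (delta k n (), b) = uB n ((), b)"
    and "\<And>n i a. i \<in> hom n 1 \<Longrightarrow> a \<in> psh_obj A n \<Longrightarrow> h n (i, m n a) = uI n (i, a)"
    and "\<And>n i b. i \<in> hom n 1 \<Longrightarrow> b \<in> psh_obj B n \<Longrightarrow> f n (h n (i, b)) = v n (i, b)"
    by (rule rlp_rBE[OF R uB1 uI v]) (use c1 c2 c3 in auto)
  then show "\<exists>h. is_nat (prod_psh Ipsh B) Y h \<and>
     (\<forall>n p. p \<in> psh_obj (prod_psh one_psh B) n \<longrightarrow> h n ((\<lambda>n (x, b). (delta k n x, b)) n p) = uB n p) \<and>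
     (\<forall>n c. c \<in> psh_obj (prod_psh Ipsh A) n \<longrightarrow> h n ((\<lambda>n (i, a). (i, m n a)) n c) = uI n c) \<and>
     (\<forall>n d. d \<in> psh_obj (prod_psh Ipsh B) n \<longrightarrow> f n (h n d) = v n d)"
    by auto
qed

lemma lifts_pp_delta_iff_rlp_rB:
  assumes "is_psh A" and "is_nat A B m"
  shows "lifts (pp_dom one_psh Ipsh (delta k) A B m) (prod_psh Ipsh B) (pp_map (delta k) m) Y X f \<longleftrightarrow>
    rlp_rB (\<lambda>n _. delta k n ()) A B m Y X f"
proof -
  have "lifts (pp_dom one_psh Ipsh (delta k) A B m) (prod_psh Ipsh B) (pp_map (delta k) m) Y X f \<longleftrightarrow>
    span_lifts (prod_psh one_psh A) (prod_psh one_psh B) (prod_psh Ipsh A)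
        (\<lambda>n (x, a). (x, m n a)) (\<lambda>n (x, a). (delta k n x, a)) (prod_psh Ipsh B)
        (\<lambda>n (x, b). (delta k n x, b)) (\<lambda>n (i, a). (i, m n a)) Y X f"
    unfolding pp_dom_def pp_map_def using assms
    by (intro lifts_pushout_iff)
      (auto simp: is_psh_prod_psh is_psh_one_psh is_nat_def delta_in_hom compose_delta)
  then show ?thesis
    using rlp_rB_delta_if_span_lifts span_lifts_if_rlp_rB_delta by blast
qed

lemma rlp_rB_retract:
  assumes rlp: "rlp_rB (\<lambda>n b. r n (\<beta>' n b)) A' B' m' Y X f"
    and \<alpha>: "is_nat A A' \<alpha>" and \<alpha>': "is_nat A' A \<alpha>'" and \<beta>: "is_nat B B' \<beta>" and \<beta>': "is_nat B' B \<beta>'"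
    and \<alpha>'_\<alpha>: "\<And>n a. a \<in> psh_obj A n \<Longrightarrow> \<alpha>' n (\<alpha> n a) = a"
    and \<beta>'_\<beta>: "\<And>n b. b \<in> psh_obj B n \<Longrightarrow> \<beta>' n (\<beta> n b) = b"
    and \<beta>_m: "\<And>n a. a \<in> psh_obj A n \<Longrightarrow> \<beta> n (m n a) = m' n (\<alpha> n a)"
    and \<beta>'_m': "\<And>n a. a \<in> psh_obj A' n \<Longrightarrow> \<beta>' n (m' n a) = m n (\<alpha>' n a)"
  shows "rlp_rB r A B m Y X f"
proof (rule rlp_rBI)
  fix uB uI v
  assume uB: "is_nat B Y uB" and uI: "is_nat (prod_psh Ipsh A) Y uI" and v: "is_nat (prod_psh Ipsh B) X v"
    and compat: "\<And>n a. a \<in> psh_obj A n \<Longrightarrow> uB n (m n a) = uI n (r n (m n a), a)"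
    and fB: "\<And>n b. b \<in> psh_obj B n \<Longrightarrow> f n (uB n b) = v n (r n b, b)"
    and fI: "\<And>n i a. i \<in> hom n 1 \<Longrightarrow> a \<in> psh_obj A n \<Longrightarrow> f n (uI n (i, a)) = v n (i, m n a)"
  have "is_nat (prod_psh Ipsh A') (prod_psh Ipsh A) (\<lambda>n p. (fst p, \<alpha>' n (snd p)))"
    by (rule is_nat_Pair[OF is_nat_fst is_nat_comp[OF is_nat_snd \<alpha>']])
  then have uI': "is_nat (prod_psh Ipsh A') Y (\<lambda>n p. uI n (fst p, \<alpha>' n (snd p)))"
    by (rule is_nat_comp[OF _ uI])
  have "is_nat (prod_psh Ipsh B') (prod_psh Ipsh B) (\<lambda>n p. (fst p, \<beta>' n (snd p)))"
    by (rule is_nat_Pair[OF is_nat_fst is_nat_comp[OF is_nat_snd \<beta>']])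
  then have v': "is_nat (prod_psh Ipsh B') X (\<lambda>n p. v n (fst p, \<beta>' n (snd p)))"
    by (rule is_nat_comp[OF _ v])
  obtain k' where k': "is_nat (prod_psh Ipsh B') Y k'"
    and k'_graph: "\<And>n b. b \<in> psh_obj B' n \<Longrightarrow> k' n (r n (\<beta>' n b), b) = uB n (\<beta>' n b)"
    and k'_m': "\<And>n i a. i \<in> hom n 1 \<Longrightarrow> a \<in> psh_obj A' n \<Longrightarrow> k' n (i, m' n a) = uI n (i, \<alpha>' n a)"
    and k'_f: "\<And>n i b. i \<in> hom n 1 \<Longrightarrow> b \<in> psh_obj B' n \<Longrightarrow> f n (k' n (i, b)) = v n (i, \<beta>' n b)"
    by (rule rlp_rBE[OF rlp is_nat_comp[OF \<beta>' uB] uI' v'])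
      (auto simp: \<beta>'_m' compat fB fI is_nat_in_obj[OF \<alpha>'] is_nat_in_obj[OF \<beta>'])
  have "is_nat (prod_psh Ipsh B) (prod_psh Ipsh B') (\<lambda>n p. (fst p, \<beta> n (snd p)))"
    by (rule is_nat_Pair[OF is_nat_fst is_nat_comp[OF is_nat_snd \<beta>]])
  then have "is_nat (prod_psh Ipsh B) Y (\<lambda>n p. k' n (fst p, \<beta> n (snd p)))"
    by (rule is_nat_comp[OF _ k'])
  moreover have "k' n (r n b, \<beta> n b) = uB n b" if "b \<in> psh_obj B n" for n b
    using k'_graph[OF is_nat_in_obj[OF \<beta> that]] by (simp add: \<beta>'_\<beta> that)
  moreover have "k' n (i, \<beta> n (m n a)) = uI n (i, a)" if "i \<in> hom n 1" and "a \<in> psh_obj A n" for n i a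
    using k'_m'[OF that(1) is_nat_in_obj[OF \<alpha> that(2)]] by (simp add: \<beta>_m \<alpha>'_\<alpha> that)
  moreover have "f n (k' n (i, \<beta> n b)) = v n (i, b)" if "i \<in> hom n 1" and "b \<in> psh_obj B n" for n i b
    using k'_f[OF that(1) is_nat_in_obj[OF \<beta> that(2)]] by (simp add: \<beta>'_\<beta> that)
  ultimately show "\<exists>k. is_nat (prod_psh Ipsh B) Y k \<and>
       (\<forall>n b. b \<in> psh_obj B n \<longrightarrow> k n (r n b, b) = uB n b) \<and>
       (\<forall>n i a. i \<in> hom n 1 \<longrightarrow> a \<in> psh_obj A n \<longrightarrow> k n (i, m n a) = uI n (i, a)) \<and>
       (\<forall>n i b. i \<in> hom n 1 \<longrightarrow> b \<in> psh_obj B n \<longrightarrow> f n (k n (i, b)) = v n (i, b))"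
    by (intro exI[of _ "\<lambda>n p. k' n (fst p, \<beta> n (snd p))"]) auto
qed

lemma rlp_rB_const_encode:
  fixes E :: "nat \<Rightarrow> 'b \<Rightarrow> 'a" and c :: "nat \<Rightarrow> nat set \<Rightarrow> nat set"
  assumes rlp: "\<And>(A' :: 'a psh) (B' :: 'a psh) m'. is_psh A' \<Longrightarrow> is_psh B' \<Longrightarrow> is_mono A' B' m' \<Longrightarrow>
      rlp_rB (\<lambda>n _. c n) A' B' m' Y X f"
    and A: "is_psh A" and B: "is_psh B" and m: "is_mono A B m"
    and E: "\<And>n. inj_on (E n) (psh_obj B n)"
  shows "rlp_rB (\<lambda>n _. c n) A B m Y X f"
proof -
  have m_nat: "is_nat A B m" and m_inj: "\<And>n. inj_on (m n) (psh_obj A n)"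
    using m by (auto simp: is_mono_def)
  have EA: "inj_on (\<lambda>a. E n (m n a)) (psh_obj A n)" for n
    using comp_inj_on[OF m_inj inj_on_subset[OF E]] is_nat_in_obj[OF m_nat]
    by (auto simp: comp_def)
  let ?A' = "encode_psh (\<lambda>n a. E n (m n a)) A" and ?B' = "encode_psh E B"
  have "is_mono ?A' ?B' (\<lambda>n x. x)"
    unfolding is_mono_def is_nat_def
    using is_nat_in_obj[OF m_nat] is_nat_act[OF m_nat] psh_act_in_obj[OF A] EA E
      psh_act_encode_psh[where E = "\<lambda>n a. E n (m n a)" and P = A, OF EA] by auto
  then have "rlp_rB (\<lambda>n _. c n) ?A' ?B' (\<lambda>n x. x) Y X f"
    by (intro rlp is_psh_encode_psh A B EA E)
  then show ?thesis
  proof (rule rlp_rB_retract[where r = "\<lambda>n _. c n"])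
    show "is_nat A ?A' (\<lambda>n a. E n (m n a))" and "is_nat B ?B' E"
      using EA E by (auto intro: is_nat_encode)
    show "is_nat ?A' A (\<lambda>n. the_inv_into (psh_obj A n) (\<lambda>a. E n (m n a)))"
      and "is_nat ?B' B (\<lambda>n. the_inv_into (psh_obj B n) (E n))"
      using EA E by (auto intro: is_nat_decode A B)
  qed (auto simp: the_inv_into_f_f[OF EA] the_inv_into_f_f[OF E] is_nat_in_obj[OF m_nat])
qed

definition Mr_image ::
  "(nat \<Rightarrow> 'b \<Rightarrow> nat set \<Rightarrow> nat set) \<Rightarrow> 'x psh \<Rightarrow> 'b psh \<Rightarrow> (nat \<Rightarrow> 'x \<Rightarrow> 'b) \<Rightarrow>
   ((nat set \<Rightarrow> nat set) \<times> 'b) psh"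
where
  "Mr_image r A B m =
     \<lparr>psh_obj = (\<lambda>n. {(i, b) \<in> hom n 1 \<times> psh_obj B n. i = r n b \<or> b \<in> m n ` psh_obj A n}),
      psh_act = psh_act (prod_psh Ipsh B)\<rparr>"

lemma psh_obj_Mr_image:
  "(i, b) \<in> psh_obj (Mr_image r A B m) n \<longleftrightarrow>
    i \<in> hom n 1 \<and> b \<in> psh_obj B n \<and> (i = r n b \<or> b \<in> m n ` psh_obj A n)"
  by (simp add: Mr_image_def)

lemma is_psh_Mr_image:
  assumes A: "is_psh A" and B: "is_psh B" and r: "is_nat B Ipsh r" and m: "is_nat A B m"
  shows "is_psh (Mr_image r A B m)"
proof -
  have "psh_act (prod_psh Ipsh B) k n \<phi> p \<in> psh_obj (Mr_image r A B m) k"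
    if \<phi>: "\<phi> \<in> hom k n" and p: "p \<in> psh_obj (Mr_image r A B m) n" for k n \<phi> p
  proof -
    obtain i b where "p = (i, b)" and i: "i \<in> hom n 1" and b: "b \<in> psh_obj B n"
      and ib: "i = r n b \<or> b \<in> m n ` psh_obj A n"
      using p by (cases p) (auto simp: psh_obj_Mr_image)
    moreover have "compose (Cube k) i \<phi> = r k (psh_act B k n \<phi> b) \<or>
        psh_act B k n \<phi> b \<in> m k ` psh_obj A k"
      using ib
    proof
      assume "i = r n b"
      then show ?thesis
        using is_nat_act[OF r \<phi> b] by simp
    next
      assume "b \<in> m n ` psh_obj A n"
      then show ?thesis
        using is_nat_act[OF m \<phi>] psh_act_in_obj[OF A \<phi>] by (auto intro!: image_eqI)
    qed
    ultimately show ?thesis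
      using compose_in_hom[OF \<phi> i] psh_act_in_obj[OF B \<phi> b] by (simp add: psh_obj_Mr_image)
  qed
  moreover have "psh_obj (Mr_image r A B m) n \<subseteq> psh_obj (prod_psh Ipsh B) n" for n
    by (auto simp: Mr_image_def)
  ultimately show ?thesis
    using is_psh_prod_psh[OF is_psh_Ipsh B] unfolding is_psh_def
    by (simp add: Mr_image_def) blast
qed

lemma is_mono_Mr_image: "is_mono (Mr_image r A B m) (prod_psh Ipsh B) (\<lambda>n x. x)"
  by (auto simp: is_mono_def is_nat_def Mr_image_def)

section \<open>The connection argument\<close>

lemma is_nat_shear:
  "is_nat P Ipsh s \<Longrightarrow>
    is_nat (prod_psh Ipsh P) (prod_psh Ipsh P) (\<lambda>n p. (Ijoin n (fst p) (s n (snd p)), snd p))"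
  by (auto simp: is_nat_def Ijoin_in_hom compose_Ijoin)

lemma is_nat_Ijoin_prod:
  "is_nat (prod_psh Ipsh (prod_psh Ipsh P)) (prod_psh Ipsh P) (\<lambda>n p. (Ijoin n (fst p) (fst (snd p)), snd (snd p)))"
  by (auto simp: is_nat_def Ijoin_in_hom compose_Ijoin)

lemma rlp_delta0_sheared_lift:
  assumes rlp: "rlp_rB (\<lambda>n _. delta 0 n ()) A B m Y X f"
    and r: "is_nat B Ipsh r" and m: "is_nat A B m"
    and uB: "is_nat B Y uB" and uI: "is_nat (prod_psh Ipsh A) Y uI" and v: "is_nat (prod_psh Ipsh B) X v"
    and compat: "\<And>n a. a \<in> psh_obj A n \<Longrightarrow> uB n (m n a) = uI n (r n (m n a), a)"
    and fB: "\<And>n b. b \<in> psh_obj B n \<Longrightarrow> f n (uB n b) = v n (r n b, b)"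
    and fI: "\<And>n i a. i \<in> hom n 1 \<Longrightarrow> a \<in> psh_obj A n \<Longrightarrow> f n (uI n (i, a)) = v n (i, m n a)"
  obtains h where "is_nat (prod_psh Ipsh B) Y h"
    and "\<And>n b. b \<in> psh_obj B n \<Longrightarrow> h n (delta 0 n (), b) = uB n b"
    and "\<And>n i a. i \<in> hom n 1 \<Longrightarrow> a \<in> psh_obj A n \<Longrightarrow> h n (i, m n a) = uI n (Ijoin n i (r n (m n a)), a)"
    and "\<And>n i b. i \<in> hom n 1 \<Longrightarrow> b \<in> psh_obj B n \<Longrightarrow> f n (h n (i, b)) = v n (Ijoin n i (r n b), b)"
proof -
  have uI': "is_nat (prod_psh Ipsh A) Y (\<lambda>n p. uI n (Ijoin n (fst p) (r n (m n (snd p))), snd p))"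
    by (rule is_nat_comp[OF is_nat_shear[OF is_nat_comp[OF m r]] uI])
  have v': "is_nat (prod_psh Ipsh B) X (\<lambda>n p. v n (Ijoin n (fst p) (r n (snd p)), snd p))"
    by (rule is_nat_comp[OF is_nat_shear[OF r] v])
  have rB: "r n b \<in> hom n 1" if "b \<in> psh_obj B n" for n b
    using is_nat_in_obj[OF r that] by simp
  show ?thesis
    by (rule rlp_rBE[OF rlp uB uI' v'])
      (use that in \<open>auto simp: Ijoin_delta0 Ijoin_in_hom compat fB fI rB is_nat_in_obj[OF m]\<close>)
qed

lemma Mr_image_cases:
  assumes "(i, b) \<in> psh_obj (Mr_image r A B m) n"
  obtains (graph) "i = r n b" | (image) a where "a \<in> psh_obj A n" and "b = m n a"
  using assms by (auto simp: psh_obj_Mr_image)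

definition Mr_patch ::
  "'x psh \<Rightarrow> (nat \<Rightarrow> 'x \<Rightarrow> 'b) \<Rightarrow> (nat \<Rightarrow> (nat set \<Rightarrow> nat set) \<times> 'b \<Rightarrow> 'y) \<Rightarrow>
   (nat \<Rightarrow> (nat set \<Rightarrow> nat set) \<times> 'x \<Rightarrow> 'y) \<Rightarrow> nat \<Rightarrow> (nat set \<Rightarrow> nat set) \<times> (nat set \<Rightarrow> nat set) \<times> 'b \<Rightarrow> 'y"
where
  "Mr_patch A m h uI n p =
     (case p of (z, i, b) \<Rightarrow>
       if b \<in> m n ` psh_obj A n then uI n (Ijoin n z i, the_inv_into (psh_obj A n) (m n) b)
       else h n (z, b))"

lemma Mr_patch_image:
  "inj_on (m n) (psh_obj A n) \<Longrightarrow> a \<in> psh_obj A n \<Longrightarrow> Mr_patch A m h uI n (z, i, m n a) = uI n (Ijoin n z i, a)"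
  by (simp add: Mr_patch_def the_inv_into_f_f)

lemma Mr_patch_graph:
  assumes "is_mono A B m"
    and "\<And>n z a. z \<in> hom n 1 \<Longrightarrow> a \<in> psh_obj A n \<Longrightarrow> h n (z, m n a) = uI n (Ijoin n z (r n (m n a)), a)"
    and "z \<in> hom n 1"
  shows "Mr_patch A m h uI n (z, r n b, b) = h n (z, b)"
  using assms by (auto simp: Mr_patch_def the_inv_into_f_f is_mono_def)

lemma Mr_patch_act:
  assumes A: "is_psh A" and r: "is_nat B Ipsh r" and m: "is_mono A B m"
    and h: "is_nat (prod_psh Ipsh B) Y h" and uI: "is_nat (prod_psh Ipsh A) Y uI"
    and h_m: "\<And>n z a. z \<in> hom n 1 \<Longrightarrow> a \<in> psh_obj A n \<Longrightarrow> h n (z, m n a) = uI n (Ijoin n z (r n (m n a)), a)"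
    and \<phi>: "\<phi> \<in> hom k n" and z: "z \<in> hom n 1" and ib: "(i, b) \<in> psh_obj (Mr_image r A B m) n"
  shows "Mr_patch A m h uI k (compose (Cube k) z \<phi>, compose (Cube k) i \<phi>, psh_act B k n \<phi> b) =
    psh_act Y k n \<phi> (Mr_patch A m h uI n (z, i, b))"
proof -
  have m_nat: "is_nat A B m" and m_inj: "\<And>n. inj_on (m n) (psh_obj A n)"
    using m by (auto simp: is_mono_def)
  have i: "i \<in> hom n 1" and b: "b \<in> psh_obj B n"
    using ib by (auto simp: psh_obj_Mr_image)
  have z': "compose (Cube k) z \<phi> \<in> hom k 1"
    using compose_in_hom[OF \<phi> z] .
  have patch_graph: "Mr_patch A m h uI n' (z', r n' b', b') = h n' (z', b')" if "z' \<in> hom n' 1" for n' z' b'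
    by (rule Mr_patch_graph[OF m _ that]) (fact h_m)
  from ib show ?thesis
  proof (cases rule: Mr_image_cases)
    case graph
    have "Mr_patch A m h uI k (compose (Cube k) z \<phi>, compose (Cube k) i \<phi>, psh_act B k n \<phi> b) =
        h k (compose (Cube k) z \<phi>, psh_act B k n \<phi> b)"
      using patch_graph[OF z'] graph is_nat_act[OF r \<phi> b, symmetric] by simp
    also have "\<dots> = psh_act Y k n \<phi> (h n (z, b))"
      using is_nat_act[OF h \<phi>, of "(z, b)"] z b by simp
    also have "\<dots> = psh_act Y k n \<phi> (Mr_patch A m h uI n (z, i, b))"
      using patch_graph[OF z] graph by simp
    finally show ?thesis .
  next
    case (image a)
    have "Mr_patch A m h uI k (compose (Cube k) z \<phi>, compose (Cube k) i \<phi>, psh_act B k n \<phi> b) =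
        uI k (psh_act (prod_psh Ipsh A) k n \<phi> (Ijoin n z i, a))"
      using image is_nat_act[OF m_nat \<phi> image(1), symmetric] psh_act_in_obj[OF A \<phi> image(1)] \<phi>
      by (simp add: Mr_patch_image m_inj compose_Ijoin)
    also have "\<dots> = psh_act Y k n \<phi> (Mr_patch A m h uI n (z, i, b))"
      using is_nat_act[OF uI \<phi>, of "(Ijoin n z i, a)"] image z i Ijoin_in_hom
      by (simp add: Mr_patch_image m_inj)
    finally show ?thesis .
  qed
qed

lemma is_nat_Mr_patch:
  assumes A: "is_psh A" and r: "is_nat B Ipsh r" and m: "is_mono A B m"
    and h: "is_nat (prod_psh Ipsh B) Y h" and uI: "is_nat (prod_psh Ipsh A) Y uI"
    and h_m: "\<And>n z a. z \<in> hom n 1 \<Longrightarrow> a \<in> psh_obj A n \<Longrightarrow> h n (z, m n a) = uI n (Ijoin n z (r n (m n a)), a)"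
  shows "is_nat (prod_psh Ipsh (Mr_image r A B m)) Y (Mr_patch A m h uI)"
  unfolding is_nat_def
proof (intro conjI allI impI)
  fix n p
  assume "p \<in> psh_obj (prod_psh Ipsh (Mr_image r A B m)) n"
  then obtain z i b where p: "p = (z, i, b)" and z: "z \<in> hom n 1"
    and ib: "(i, b) \<in> psh_obj (Mr_image r A B m) n"
    by (cases p) auto
  then have i: "i \<in> hom n 1" and b: "b \<in> psh_obj B n"
    by (auto simp: psh_obj_Mr_image)
  have m_inj: "inj_on (m n) (psh_obj A n)"
    using m by (simp add: is_mono_def)
  have patch_graph: "Mr_patch A m h uI n (z, r n b, b) = h n (z, b)"
    by (rule Mr_patch_graph[OF m _ z]) (fact h_m)
  from ib show "Mr_patch A m h uI n p \<in> psh_obj Y n"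
  proof (cases rule: Mr_image_cases)
    case graph
    then show ?thesis
      using patch_graph is_nat_in_obj[OF h] z b p by simp
  next
    case (image a)
    then show ?thesis
      using is_nat_in_obj[OF uI] z i p Ijoin_in_hom by (simp add: Mr_patch_image m_inj)
  qed
next
  fix k n \<phi> p
  assume \<phi>: "\<phi> \<in> hom k n" and "p \<in> psh_obj (prod_psh Ipsh (Mr_image r A B m)) n"
  then obtain z i b where "p = (z, i, b)" and "z \<in> hom n 1" and "(i, b) \<in> psh_obj (Mr_image r A B m) n"
    by (cases p) auto
  then show "Mr_patch A m h uI k (psh_act (prod_psh Ipsh (Mr_image r A B m)) k n \<phi> p) =
      psh_act Y k n \<phi> (Mr_patch A m h uI n p)"
    using Mr_patch_act[OF A r m h uI h_m \<phi>] by (simp add: Mr_image_def)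
qed

lemma Mr_patch_delta1:
  assumes r: "is_nat B Ipsh r" and m: "is_mono A B m"
    and h_m: "\<And>n z a. z \<in> hom n 1 \<Longrightarrow> a \<in> psh_obj A n \<Longrightarrow> h n (z, m n a) = uI n (Ijoin n z (r n (m n a)), a)"
    and ib: "(i, b) \<in> psh_obj (Mr_image r A B m) n"
  shows "Mr_patch A m h uI n (delta 1 n (), i, b) = h n (delta 1 n (), b)"
proof -
  have m_inj: "inj_on (m n) (psh_obj A n)"
    using m by (simp add: is_mono_def)
  from ib show ?thesis
  proof (cases rule: Mr_image_cases)
    case graph
    have "Mr_patch A m h uI n (delta 1 n (), r n b, b) = h n (delta 1 n (), b)"
      by (rule Mr_patch_graph[OF m _ delta_in_hom]) (fact h_m)
    with graph show ?thesis
      by simp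
  next
    case (image a)
    have "r n (m n a) \<in> hom n 1"
      using is_nat_in_obj[OF r] is_nat_in_obj[OF m[unfolded is_mono_def, THEN conjunct1] image(1)] by simp
    then show ?thesis
      using image ib h_m[OF delta_in_hom image(1)]
      by (simp add: psh_obj_Mr_image Mr_patch_image m_inj Ijoin_delta1)
  qed
qed

lemma f_Mr_patch:
  assumes m: "is_mono A B m"
    and fI: "\<And>n i a. i \<in> hom n 1 \<Longrightarrow> a \<in> psh_obj A n \<Longrightarrow> f n (uI n (i, a)) = v n (i, m n a)"
    and h_m: "\<And>n z a. z \<in> hom n 1 \<Longrightarrow> a \<in> psh_obj A n \<Longrightarrow> h n (z, m n a) = uI n (Ijoin n z (r n (m n a)), a)"
    and h_f: "\<And>n i b. i \<in> hom n 1 \<Longrightarrow> b \<in> psh_obj B n \<Longrightarrow> f n (h n (i, b)) = v n (Ijoin n i (r n b), b)"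
    and z: "z \<in> hom n 1" and ib: "(i, b) \<in> psh_obj (Mr_image r A B m) n"
  shows "f n (Mr_patch A m h uI n (z, i, b)) = v n (Ijoin n z i, b)"
proof -
  have m_inj: "inj_on (m n) (psh_obj A n)"
    using m by (simp add: is_mono_def)
  from ib show ?thesis
  proof (cases rule: Mr_image_cases)
    case graph
    have "Mr_patch A m h uI n (z, r n b, b) = h n (z, b)"
      by (rule Mr_patch_graph[OF m _ z]) (fact h_m)
    with graph ib z show ?thesis
      by (simp add: psh_obj_Mr_image h_f)
  next
    case (image a)
    then show ?thesis
      using ib z by (simp add: psh_obj_Mr_image Mr_patch_image m_inj fI Ijoin_in_hom)
  qed
qed

lemma rlp_delta1_patched_lift:
  assumes rlp: "rlp_rB (\<lambda>n _. delta 1 n ()) (Mr_image r A B m) (prod_psh Ipsh B) (\<lambda>n x. x) Y X f"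
    and A: "is_psh A" and r: "is_nat B Ipsh r" and m: "is_mono A B m"
    and uI: "is_nat (prod_psh Ipsh A) Y uI" and v: "is_nat (prod_psh Ipsh B) X v"
    and fI: "\<And>n i a. i \<in> hom n 1 \<Longrightarrow> a \<in> psh_obj A n \<Longrightarrow> f n (uI n (i, a)) = v n (i, m n a)"
    and h: "is_nat (prod_psh Ipsh B) Y h"
    and h_m: "\<And>n i a. i \<in> hom n 1 \<Longrightarrow> a \<in> psh_obj A n \<Longrightarrow> h n (i, m n a) = uI n (Ijoin n i (r n (m n a)), a)"
    and h_f: "\<And>n i b. i \<in> hom n 1 \<Longrightarrow> b \<in> psh_obj B n \<Longrightarrow> f n (h n (i, b)) = v n (Ijoin n i (r n b), b)"
  obtains k where "is_nat (prod_psh Ipsh B) Y k"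
    and "\<And>n b. b \<in> psh_obj B n \<Longrightarrow> k n (r n b, b) = h n (delta 0 n (), b)"
    and "\<And>n i a. i \<in> hom n 1 \<Longrightarrow> a \<in> psh_obj A n \<Longrightarrow> k n (i, m n a) = uI n (i, a)"
    and "\<And>n i b. i \<in> hom n 1 \<Longrightarrow> b \<in> psh_obj B n \<Longrightarrow> f n (k n (i, b)) = v n (i, b)"
proof -
  have m_nat: "is_nat A B m" and m_inj: "\<And>n. inj_on (m n) (psh_obj A n)"
    using m by (auto simp: is_mono_def)
  have rB: "r n b \<in> hom n 1" if "b \<in> psh_obj B n" for n b
    using is_nat_in_obj[OF r that] by simp
  have patch_graph: "Mr_patch A m h uI n (z, r n b, b) = h n (z, b)" if "z \<in> hom n 1" for n z b
    by (rule Mr_patch_graph[OF m _ that]) (fact h_m)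
  have patch_delta1: "Mr_patch A m h uI n (delta 1 n (), i, b) = h n (delta 1 n (), b)"
    if "(i, b) \<in> psh_obj (Mr_image r A B m) n" for n i b
    by (rule Mr_patch_delta1[OF r m _ that]) (fact h_m)
  have f_patch: "f n (Mr_patch A m h uI n (z, i, b)) = v n (Ijoin n z i, b)"
    if "z \<in> hom n 1" and "(i, b) \<in> psh_obj (Mr_image r A B m) n" for n z i b
    by (rule f_Mr_patch[OF m _ _ _ that]) (fact fI h_m h_f)+
  have top: "is_nat (prod_psh Ipsh B) Y (\<lambda>n p. h n (delta 1 n (), snd p))"
    by (rule is_nat_comp[OF is_nat_Pair[OF is_nat_delta is_nat_snd] h])
  have base: "is_nat (prod_psh Ipsh (prod_psh Ipsh B)) X (\<lambda>n p. v n (Ijoin n (fst p) (fst (snd p)), snd (snd p)))"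
    by (rule is_nat_comp[OF is_nat_Ijoin_prod v])
  obtain H where H: "is_nat (prod_psh Ipsh (prod_psh Ipsh B)) Y H"
    and H_patch: "\<And>n z s. z \<in> hom n 1 \<Longrightarrow> s \<in> psh_obj (Mr_image r A B m) n \<Longrightarrow>
      H n (z, s) = Mr_patch A m h uI n (z, s)"
    and H_f: "\<And>n z p. z \<in> hom n 1 \<Longrightarrow> p \<in> psh_obj (prod_psh Ipsh B) n \<Longrightarrow>
      f n (H n (z, p)) = v n (Ijoin n z (fst p), snd p)"
    by (rule rlp_rBE[OF rlp top is_nat_Mr_patch[OF A r m h uI h_m] base])
      (use patch_delta1 f_patch in \<open>auto simp: h_f delta_in_hom Ijoin_delta1 rB\<close>)
  show ?thesis
  proof (rule that)
    show "is_nat (prod_psh Ipsh B) Y (\<lambda>n p. H n (delta 0 n (), p))"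
      by (rule is_nat_comp[OF is_nat_Pair[OF is_nat_delta is_nat_id] H])
    show "H n (delta 0 n (), r n b, b) = h n (delta 0 n (), b)" if "b \<in> psh_obj B n" for n b
      using that H_patch[OF delta_in_hom] rB patch_graph[OF delta_in_hom]
      by (simp add: psh_obj_Mr_image)
    show "H n (delta 0 n (), i, m n a) = uI n (i, a)" if "i \<in> hom n 1" and "a \<in> psh_obj A n" for n i a
    proof -
      have "(i, m n a) \<in> psh_obj (Mr_image r A B m) n"
        using that is_nat_in_obj[OF m_nat] by (auto simp: psh_obj_Mr_image)
      then show ?thesis
        using that H_patch[OF delta_in_hom] by (simp add: Mr_patch_image m_inj Ijoin_delta0)
    qed
    show "f n (H n (delta 0 n (), i, b)) = v n (i, b)" if "i \<in> hom n 1" and "b \<in> psh_obj B n" for n i b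
      using that H_f delta_in_hom by (simp add: Ijoin_delta0)
  qed
qed

lemma rlp_rB_of_rlp_delta:
  assumes A: "is_psh A" and r: "is_nat B Ipsh r" and m: "is_mono A B m"
    and rlp0: "rlp_rB (\<lambda>n _. delta 0 n ()) A B m Y X f"
    and rlp1: "rlp_rB (\<lambda>n _. delta 1 n ()) (Mr_image r A B m) (prod_psh Ipsh B) (\<lambda>n x. x) Y X f"
  shows "rlp_rB r A B m Y X f"
proof (rule rlp_rBI)
  fix uB uI v
  assume uB: "is_nat B Y uB" and uI: "is_nat (prod_psh Ipsh A) Y uI" and v: "is_nat (prod_psh Ipsh B) X v"
    and compat: "\<And>n a. a \<in> psh_obj A n \<Longrightarrow> uB n (m n a) = uI n (r n (m n a), a)"
    and fB: "\<And>n b. b \<in> psh_obj B n \<Longrightarrow> f n (uB n b) = v n (r n b, b)"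
    and fI: "\<And>n i a. i \<in> hom n 1 \<Longrightarrow> a \<in> psh_obj A n \<Longrightarrow> f n (uI n (i, a)) = v n (i, m n a)"
  have m_nat: "is_nat A B m"
    using m by (simp add: is_mono_def)
  obtain h where h: "is_nat (prod_psh Ipsh B) Y h"
    and h_0: "\<And>n b. b \<in> psh_obj B n \<Longrightarrow> h n (delta 0 n (), b) = uB n b"
    and h_m: "\<And>n i a. i \<in> hom n 1 \<Longrightarrow> a \<in> psh_obj A n \<Longrightarrow> h n (i, m n a) = uI n (Ijoin n i (r n (m n a)), a)"
    and h_f: "\<And>n i b. i \<in> hom n 1 \<Longrightarrow> b \<in> psh_obj B n \<Longrightarrow> f n (h n (i, b)) = v n (Ijoin n i (r n b), b)"
    by (rule rlp_delta0_sheared_lift[OF rlp0 r m_nat uB uI v]) (use compat fB fI in auto)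
  obtain k where "is_nat (prod_psh Ipsh B) Y k"
    and "\<And>n b. b \<in> psh_obj B n \<Longrightarrow> k n (r n b, b) = h n (delta 0 n (), b)"
    and "\<And>n i a. i \<in> hom n 1 \<Longrightarrow> a \<in> psh_obj A n \<Longrightarrow> k n (i, m n a) = uI n (i, a)"
    and "\<And>n i b. i \<in> hom n 1 \<Longrightarrow> b \<in> psh_obj B n \<Longrightarrow> f n (k n (i, b)) = v n (i, b)"
    by (rule rlp_delta1_patched_lift[OF rlp1 A r m uI v _ h]) (use fI h_m h_f in auto)
  then show "\<exists>k. is_nat (prod_psh Ipsh B) Y k \<and>
       (\<forall>n b. b \<in> psh_obj B n \<longrightarrow> k n (r n b, b) = uB n b) \<and>
       (\<forall>n i a. i \<in> hom n 1 \<longrightarrow> a \<in> psh_obj A n \<longrightarrow> k n (i, m n a) = uI n (i, a)) \<and>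
       (\<forall>n i b. i \<in> hom n 1 \<longrightarrow> b \<in> psh_obj B n \<longrightarrow> f n (k n (i, b)) = v n (i, b))"
    using h_0 by auto
qed

lemma rlp_rB_delta_if_rlp_delta_pp:
  fixes A B :: "'a psh" and Y X :: "'a psh"
  assumes "rlp_delta_pp Y X f" and "k \<in> {0, 1}"
    and A: "is_psh A" and "is_psh B" and m: "is_mono A B m"
  shows "rlp_rB (\<lambda>n _. delta k n ()) A B m Y X f"
proof -
  have "lifts (pp_dom one_psh Ipsh (delta k) A B m) (prod_psh Ipsh B) (pp_map (delta k) m) Y X f"
    using assms unfolding rlp_delta_pp_def by blast
  with m show ?thesis
    unfolding is_mono_def using lifts_pp_delta_iff_rlp_rB[OF A] by blast
qed

lemma unbiased_fibration_if_rlp_delta_pp: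
  fixes Y X :: "'a psh"
  assumes inf: "infinite (UNIV :: 'a set)" and biased: "rlp_delta_pp Y X f"
  shows "unbiased_fibration Y X f"
  unfolding unbiased_fibration_def
proof (intro allI impI, elim conjE)
  fix A B :: "'a psh" and r m
  assume A: "is_psh A" and B: "is_psh B" and r: "is_nat B Ipsh r" and m: "is_mono A B m"
  have m_nat: "is_nat A B m"
    using m by (simp add: is_mono_def)
  have "\<forall>n. \<exists>e :: (nat set \<Rightarrow> nat set) \<times> 'a \<Rightarrow> 'a. inj_on e (hom n 1 \<times> UNIV)"
    using inj_on_Times_infinite_UNIV[OF inf finite_hom] by blast
  then obtain E :: "nat \<Rightarrow> (nat set \<Rightarrow> nat set) \<times> 'a \<Rightarrow> 'a" where E: "\<And>n. inj_on (E n) (hom n 1 \<times> UNIV)"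
    by metis
  have "rlp_rB (\<lambda>n _. delta 1 n ()) (Mr_image r A B m) (prod_psh Ipsh B) (\<lambda>n x. x) Y X f"
  proof (rule rlp_rB_const_encode[where E = E])
    show "is_psh (Mr_image r A B m)" and "is_psh (prod_psh Ipsh B)"
      using A B r m_nat by (auto intro: is_psh_Mr_image is_psh_prod_psh is_psh_Ipsh)
    show "inj_on (E n) (psh_obj (prod_psh Ipsh B) n)" for n
      using E by (rule inj_on_subset) auto
  qed (auto intro: rlp_rB_delta_if_rlp_delta_pp[OF biased] is_mono_Mr_image)
  then have "rlp_rB r A B m Y X f"
    using rlp_rB_delta_if_rlp_delta_pp[OF biased] A B m by (intro rlp_rB_of_rlp_delta[OF A r m]) auto
  then show "lifts (Mr A B r m) (prod_psh Ipsh B) (rB_map r m) Y X f"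
    by (simp add: lifts_Mr_iff_rlp_rB[OF A r m_nat])
qed

lemma rlp_delta_pp_if_unbiased_fibration:
  assumes unbiased: "unbiased_fibration Y X f"
  shows "rlp_delta_pp Y X f"
  unfolding rlp_delta_pp_def
proof (intro ballI allI impI, elim conjE)
  fix k and A B :: "'a psh" and m
  assume A: "is_psh A" and B: "is_psh B" and m: "is_mono A B m"
  have m_nat: "is_nat A B m"
    using m by (simp add: is_mono_def)
  have "lifts (Mr A B (\<lambda>n _. delta k n ()) m) (prod_psh Ipsh B) (rB_map (\<lambda>n _. delta k n ()) m) Y X f"
    using unbiased A B m is_nat_delta unfolding unbiased_fibration_def by blast
  then show "lifts (pp_dom one_psh Ipsh (delta k) A B m) (prod_psh Ipsh B) (pp_map (delta k) m) Y X f"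
    by (simp add: lifts_Mr_iff_rlp_rB[OF A is_nat_delta m_nat] lifts_pp_delta_iff_rlp_rB[OF A m_nat])
qed

theorem mainTheorem3:
  fixes Y X :: "'a psh" and f :: "nat \<Rightarrow> 'a \<Rightarrow> 'a"
  assumes "infinite (UNIV :: 'a set)"
    and "is_psh Y" and "is_psh X" and "is_nat Y X f"
  shows "rlp_delta_pp Y X f \<longleftrightarrow> unbiased_fibration Y X f"
  using unbiased_fibration_if_rlp_delta_pp[OF assms(1)] rlp_delta_pp_if_unbiased_fibration by blast

end
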